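(* Let $U$ be a Hilbert space, $T: U\rightrightarrows U$, $(\hat u,\hat w)\in\operatorname{graph}T$, and $\Xi,N,M\in\mathcal{L}(U;U)$ with $M\ge\Xi\ge0$. If $(\Xi, M-\Xi)\in\mathcal{P}(T^{-1}(\hat w),\hat u)$, then $(N,\Xi)$-strong submonotonicity of $T$ at $(\hat u,\hat w)$ implies $(\Xi,N,M)$-partial strong submonotonicity of $T$ at $(\hat u,\hat w)$. If $T^{-1}(\hat w)=\{\hat u\}$ is a singleton, these two properties are equivalent (and $(\Xi,M-\Xi)\in\mathcal{P}(T^{-1}(\hat w),\hat u)$ holds).
   Context: For $T\in\mathcal{L}(U;U)$: $\langle x,z\rangle_T:=\langle Tx,z\rangle$, $\|x\|^2_T:=\langle Tx,x\rangle$, $\operatorname{dist}^2_T(z,A):=\inf_{u\in A}\|z-u\|^2_T$; $T\ge S$ means $T-S$ positive semidefinite. For $\Xi,N,M\in\mathcal{L}(U;U)$ with $M\ge0$, $T$ is $(\Xi,N,M)$-partially strongly submonotone at $(\hat u,\hat w)$ if there is a neighbourhood $\mathcal{U}\ni\hat u$ with $\inf_{u^*\in T^{-1}(\hat w)}(\langle w-\hat w,u-u^*\rangle_N + \|u-u^*\|^2_{M-\Xi}) \ge \operatorname{dist}^2_M(u,T^{-1}(\hat w))$ for all $u\in\mathcal{U}$, $w\in T(u)$. $T$ is $(N,M)$-strongly submonotone if it is $(M,N,M)$-partially strongly submonotone. For $M,M'\in\mathcal{L}(U;U)$, $A\subset U$ and $\hat u\in A$, one writes $(M,M')\in\mathcal{P}(A,\hat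 u)$ if there is a neighbourhood $\mathcal{U}'\ni\hat u$ such that each $u\in\mathcal{U}'$ has a common projection onto $A$ with respect to $\|\cdot\|_M$ and $\|\cdot\|_{M'}$, i.e. some $u^*\in A$ minimises both $\|u-\cdot\|_M$ and $\|u-\cdot\|_{M'}$ over $A$. *)

theory Defs
  imports "HOL-Analysis.Analysis"
begin

definition sqnorm_op :: "('a::real_inner \<Rightarrow> 'a) \<Rightarrow> 'a \<Rightarrow> real" where
  "sqnorm_op T x = inner (T x) x"

definition inner_op :: "('a::real_inner \<Rightarrow> 'a) \<Rightarrow> 'a \<Rightarrow> 'a \<Rightarrow> real" where
  "inner_op T x z = inner (T x) z"

definition dist2_op :: "('a::real_inner \<Rightarrow> 'a) \<Rightarrow> 'a \<Rightarrow> 'a set \<Rightarrow> real" where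
  "dist2_op T z A = (INF u\<in>A. sqnorm_op T (z - u))"

definition psd_op :: "('a::real_inner \<Rightarrow> 'a) \<Rightarrow> bool" where
  "psd_op T \<longleftrightarrow> (\<forall>x. 0 \<le> inner (T x) x)"

definition op_ge :: "('a::real_inner \<Rightarrow> 'a) \<Rightarrow> ('a \<Rightarrow> 'a) \<Rightarrow> bool" where
  "op_ge T S \<longleftrightarrow> psd_op (\<lambda>x. T x - S x)"

definition inv_img :: "('a \<Rightarrow> 'b set) \<Rightarrow> 'b \<Rightarrow> 'a set" where
  "inv_img T w = {u. w \<in> T u}"

text \<open>(Xi,N,M)-partial strong submonotonicity at (uh,wh); the inequality
  inf_{u*} (...) \<ge> d is written as: for all u*, (...) \<ge> d.\<close>
definition partially_strongly_submonotone ::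
  "('a::real_inner \<Rightarrow> 'a) \<Rightarrow> ('a \<Rightarrow> 'a) \<Rightarrow> ('a \<Rightarrow> 'a) \<Rightarrow> ('a \<Rightarrow> 'a set) \<Rightarrow> 'a \<Rightarrow> 'a \<Rightarrow> bool" where
  "partially_strongly_submonotone Xi N M T uh wh \<longleftrightarrow>
     (\<exists>S. open S \<and> uh \<in> S \<and>
        (\<forall>u\<in>S. \<forall>w\<in>T u. \<forall>us\<in>inv_img T wh.
            inner_op N (w - wh) (u - us) + sqnorm_op (\<lambda>x. M x - Xi x) (u - us)
              \<ge> dist2_op M u (inv_img T wh)))"

definition strongly_submonotone ::
  "('a::real_inner \<Rightarrow> 'a) \<Rightarrow> ('a \<Rightarrow> 'a) \<Rightarrow> ('a \<Rightarrow> 'a set) \<Rightarrow> 'a \<Rightarrow> 'a \<Rightarrow> bool" where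
  "strongly_submonotone N M T uh wh \<longleftrightarrow> partially_strongly_submonotone M N M T uh wh"

definition common_proj ::
  "('a::real_inner \<Rightarrow> 'a) \<Rightarrow> ('a \<Rightarrow> 'a) \<Rightarrow> 'a set \<Rightarrow> 'a \<Rightarrow> bool" where
  "common_proj M M' A uh \<longleftrightarrow>
     (\<exists>S. open S \<and> uh \<in> S \<and>
        (\<forall>u\<in>S. \<exists>us\<in>A.
            (\<forall>v\<in>A. sqnorm_op M (u - us) \<le> sqnorm_op M (u - v)) \<and>
            (\<forall>v\<in>A. sqnorm_op M' (u - us) \<le> sqnorm_op M' (u - v))))"

end

theory Submission
  imports Defs
begin

text \<open>A common projection p of u onto A minimises both \<open>\<parallel>u - \<cdot>\<parallel>\<^sub>\<Xi>\<close> and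
  \<open>\<parallel>u - \<cdot>\<parallel>\<^sub>M\<^sub>-\<^sub>\<Xi>\<close>, hence also their sum \<open>\<parallel>u - \<cdot>\<parallel>\<^sub>M\<close>. So
  \<open>dist\<^sup>2\<^sub>M(u, A) = dist\<^sup>2\<^sub>\<Xi>(u, A) + \<parallel>u - p\<parallel>\<^sup>2\<^sub>M\<^sub>-\<^sub>\<Xi>\<close>, and the extra term is
  dominated by \<open>\<parallel>u - u\<^sup>*\<parallel>\<^sup>2\<^sub>M\<^sub>-\<^sub>\<Xi>\<close> for every \<open>u\<^sup>* \<in> A\<close>: adding it to both sides
  of the \<open>(N,\<Xi>)\<close>-inequality gives the \<open>(\<Xi>,N,M)\<close>-inequality. For a singleton
  \<open>A = {u\<^sub>0}\<close> both distances are attained at \<open>u\<^sub>0\<close> and the two inequalities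
  differ exactly by the term \<open>\<parallel>u - u\<^sub>0\<parallel>\<^sup>2\<^sub>M\<^sub>-\<^sub>\<Xi>\<close>. Neither argument uses
  \<open>M \<ge> \<Xi> \<ge> 0\<close> or the boundedness of the operators.\<close>

lemma sqnorm_op_diff: "sqnorm_op (\<lambda>x. M x - Xi x) x = sqnorm_op M x - sqnorm_op Xi x"
  by (simp add: sqnorm_op_def inner_diff_left)

lemma dist2_op_eq_minimum:
  assumes "p \<in> A" and "\<And>v. v \<in> A \<Longrightarrow> sqnorm_op M (u - p) \<le> sqnorm_op M (u - v)"
  shows "dist2_op M u A = sqnorm_op M (u - p)"
  unfolding dist2_op_def using assms by (intro cInf_eq_minimum) auto

lemma dist2_op_singleton: "dist2_op M u {a} = sqnorm_op M (u - a)"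
  by (simp add: dist2_op_def)

lemma common_proj_singleton: "common_proj M M' {a} a"
  unfolding common_proj_def by (intro exI[of _ UNIV]) auto

lemma partially_strongly_submonotone_if_common_proj:
  assumes proj: "common_proj Xi (\<lambda>x. M x - Xi x) (inv_img T wh) uh"
    and sub: "partially_strongly_submonotone Xi N Xi T uh wh"
  shows "partially_strongly_submonotone Xi N M T uh wh"
proof -
  let ?A = "inv_img T wh" and ?R = "\<lambda>x. M x - Xi x"
  obtain S1 where S1: "open S1" "uh \<in> S1"
    and ineq: "\<And>u w us. u \<in> S1 \<Longrightarrow> w \<in> T u \<Longrightarrow> us \<in> ?A \<Longrightarrow>
      inner_op N (w - wh) (u - us) \<ge> dist2_op Xi u ?A"
    using sub unfolding partially_strongly_submonotone_def sqnorm_op_diff by fastforce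
  obtain S2 where S2: "open S2" "uh \<in> S2"
    and common: "\<forall>u\<in>S2. \<exists>p\<in>?A.
      (\<forall>v\<in>?A. sqnorm_op Xi (u - p) \<le> sqnorm_op Xi (u - v)) \<and>
      (\<forall>v\<in>?A. sqnorm_op ?R (u - p) \<le> sqnorm_op ?R (u - v))"
    using proj unfolding common_proj_def by blast
  show ?thesis unfolding partially_strongly_submonotone_def
  proof (intro exI[of _ "S1 \<inter> S2"] conjI ballI)
    fix u w us assume u: "u \<in> S1 \<inter> S2" and w: "w \<in> T u" and us: "us \<in> ?A"
    then obtain p where p: "p \<in> ?A"
      and minXi: "\<And>v. v \<in> ?A \<Longrightarrow> sqnorm_op Xi (u - p) \<le> sqnorm_op Xi (u - v)"
      and minR: "\<And>v. v \<in> ?A \<Longrightarrow> sqnorm_op ?R (u - p) \<le> sqnorm_op ?R (u - v)"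
      using common by blast
    have minM: "sqnorm_op M (u - p) \<le> sqnorm_op M (u - v)" if "v \<in> ?A" for v
      using minXi[OF that] minR[OF that] by (simp add: sqnorm_op_diff)
    have "dist2_op M u ?A = dist2_op Xi u ?A + sqnorm_op ?R (u - p)"
      using dist2_op_eq_minimum[OF p minM] dist2_op_eq_minimum[OF p minXi]
      by (simp add: sqnorm_op_diff)
    also have "\<dots> \<le> inner_op N (w - wh) (u - us) + sqnorm_op ?R (u - us)"
      using ineq[OF _ w us] minR[OF us] u by (intro add_mono) auto
    finally show "inner_op N (w - wh) (u - us) + sqnorm_op ?R (u - us) \<ge> dist2_op M u ?A" .
  qed (use S1 S2 in auto)
qed

lemma partially_strongly_submonotone_singleton_iff:
  assumes "inv_img T wh = {uh}"
  shows "partially_strongly_submonotone Xi N M T uh wh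
    \<longleftrightarrow> partially_strongly_submonotone Xi N Xi T uh wh"
  unfolding partially_strongly_submonotone_def assms dist2_op_singleton sqnorm_op_diff
  by simp

theorem proposition4p3:
  fixes T :: "'a::{real_inner, complete_space} \<Rightarrow> 'a set"
    and Xi N M :: "'a \<Rightarrow> 'a" and uh wh :: 'a
  assumes "bounded_linear Xi" and "bounded_linear N" and "bounded_linear M"
    and "op_ge M Xi" and "psd_op Xi"
    and "wh \<in> T uh"
  shows "(common_proj Xi (\<lambda>x. M x - Xi x) (inv_img T wh) uh \<longrightarrow>
            strongly_submonotone N Xi T uh wh \<longrightarrow>
            partially_strongly_submonotone Xi N M T uh wh)
       \<and> (inv_img T wh = {uh} \<longrightarrow>
            (strongly_submonotone N Xi T uh wh \<longleftrightarrow>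
             partially_strongly_submonotone Xi N M T uh wh)
            \<and> common_proj Xi (\<lambda>x. M x - Xi x) (inv_img T wh) uh)"
  using partially_strongly_submonotone_if_common_proj
    partially_strongly_submonotone_singleton_iff common_proj_singleton
  unfolding strongly_submonotone_def by metis

end
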